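(* Let $\alpha>0$, $N\ge1$, $r\ge1$, and let $(\mathbf A^k_n)$ and $(\mathbf B^k_n)$, $k\in[r]$, $n\in[N]$, be tuples of matrices with $\mathbf A^k_n,\mathbf B^k_n\in\mathbb R^{m_n\times p_n}$ and $\|\mathbf A^k_n\|_F=\|\mathbf B^k_n\|_F=\alpha$ for all $k,n$. If $\sqrt{\sum_{k=1}^r\sum_{n=1}^N\|\mathbf A^k_n-\mathbf B^k_n\|_F^2}\le\epsilon$, then $$\Big\|\sum_{k=1}^r\mathbf A^k_1\otimes\cdots\otimes\mathbf A^k_N-\sum_{k=1}^r\mathbf B^k_1\otimes\cdots\otimes\mathbf B^k_N\Big\|_F\le\alpha^{N-1}\sqrt{Nr}\,\epsilon.$$
   Context: $\otimes$ is the Kronecker product and $\|\cdot\|_F$ the Frobenius norm. *)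

theory Defs
  imports "Jordan_Normal_Form.Matrix"
begin

definition kron :: "'a :: times mat \<Rightarrow> 'a mat \<Rightarrow> 'a mat" where
  "kron A B = mat (dim_row A * dim_row B) (dim_col A * dim_col B)
     (\<lambda>(i, j). A $$ (i div dim_row B, j div dim_col B) * B $$ (i mod dim_row B, j mod dim_col B))"

fun kronN :: "(nat \<Rightarrow> 'a :: {times, zero, one} mat) \<Rightarrow> nat \<Rightarrow> 'a mat" where
  "kronN f 0 = 1\<^sub>m 1"
| "kronN f (Suc n) = kron (kronN f n) (f n)"

definition msum :: "nat \<Rightarrow> nat \<Rightarrow> (nat \<Rightarrow> 'a :: comm_monoid_add mat) \<Rightarrow> nat \<Rightarrow> 'a mat" where
  "msum d1 d2 f K = mat d1 d2 (\<lambda>ij. \<Sum>k<K. f k $$ ij)"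

definition frob :: "real mat \<Rightarrow> real" where
  "frob A = sqrt (\<Sum>i<dim_row A. \<Sum>j<dim_col A. (A $$ (i, j))\<^sup>2)"

end

theory Submission
  imports Defs "HOL-Analysis.L2_Norm"
begin

text \<open>By telescoping,
  \<open>A\<^sub>1 \<otimes> \<dots> \<otimes> A\<^sub>N - B\<^sub>1 \<otimes> \<dots> \<otimes> B\<^sub>N = \<Sum>\<^sub>n B\<^sub>1 \<otimes> \<dots> \<otimes> B\<^sub>n\<^sub>-\<^sub>1 \<otimes> (A\<^sub>n - B\<^sub>n) \<otimes> A\<^sub>n\<^sub>+\<^sub>1 \<otimes> \<dots> \<otimes> A\<^sub>N\<close>.
  The Frobenius norm is multiplicative under \<open>\<otimes>\<close>, so each of these \<open>N\<close> terms has norm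
  \<open>\<alpha>\<^sup>N\<^sup>-\<^sup>1 \<parallel>A\<^sub>n - B\<^sub>n\<parallel>\<close>. The triangle inequality over \<open>n\<close> and over the \<open>r\<close> summands,
  followed by Cauchy-Schwarz for the resulting sum of \<open>N r\<close> norms, gives the bound.\<close>

lemma sum_lessThan_mult_div_mod:
  fixes g :: "nat \<Rightarrow> nat \<Rightarrow> 'a :: comm_monoid_add"
  shows "(\<Sum>i<a * b. g (i div b) (i mod b)) = (\<Sum>i<a. \<Sum>j<b. g i j)"
proof -
  have "(\<Sum>i<a * b. g (i div b) (i mod b)) = (\<Sum>i<a. \<Sum>t\<in>{i * b..<i * b + b}. g (t div b) (t mod b))"
    by (rule sum.nat_group[symmetric])
  also have "\<dots> = (\<Sum>i<a. \<Sum>j<b. g i j)"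
  proof (rule sum.cong[OF refl])
    fix i
    have "(\<Sum>t\<in>{i * b..<i * b + b}. g (t div b) (t mod b))
        = (\<Sum>j\<in>{0..<b}. g ((i * b + j) div b) ((i * b + j) mod b))"
      by (subst sum.atLeastLessThan_shift_0) (simp add: comp_def)
    also have "\<dots> = (\<Sum>j\<in>{0..<b}. g i j)"
      by (rule sum.cong) auto
    finally show "(\<Sum>t\<in>{i * b..<i * b + b}. g (t div b) (t mod b)) = (\<Sum>j<b. g i j)"
      by (simp add: atLeast0LessThan)
  qed
  finally show ?thesis .
qed

lemma dim_kron [simp]:
  "dim_row (kron X Y) = dim_row X * dim_row Y"
  "dim_col (kron X Y) = dim_col X * dim_col Y"
  by (simp_all add: kron_def)

lemma index_kron:
  assumes "i < dim_row X * dim_row Y" and "j < dim_col X * dim_col Y"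
  shows "kron X Y $$ (i, j)
    = X $$ (i div dim_row Y, j div dim_col Y) * Y $$ (i mod dim_row Y, j mod dim_col Y)"
  using assms by (simp add: kron_def)

lemma kron_carrier_mat:
  "X \<in> carrier_mat a b \<Longrightarrow> Y \<in> carrier_mat c d \<Longrightarrow> kron X Y \<in> carrier_mat (a * c) (b * d)"
  unfolding carrier_mat_def by simp

lemma kronN_carrier_mat:
  "(\<And>j. j < n \<Longrightarrow> f j \<in> carrier_mat (m j) (p j)) \<Longrightarrow>
   kronN f n \<in> carrier_mat (\<Prod>j<n. m j) (\<Prod>j<n. p j)"
proof (induction n)
  case 0
  then show ?case by simp
next
  case (Suc n)
  then have "kronN f n \<in> carrier_mat (\<Prod>j<n. m j) (\<Prod>j<n. p j)" "f n \<in> carrier_mat (m n) (p n)"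
    by simp_all
  from kron_carrier_mat[OF this] show ?case
    by simp
qed

lemma kron_diff_split:
  fixes X Y :: "'a :: ring mat"
  assumes "X \<in> carrier_mat a b" "Y \<in> carrier_mat a b" "X' \<in> carrier_mat c d" "Y' \<in> carrier_mat c d"
  shows "kron X X' - kron Y Y' = kron (X - Y) X' + kron Y (X' - Y')"
proof (rule eq_matI)
  fix i j
  assume "i < dim_row (kron (X - Y) X' + kron Y (X' - Y'))"
    and "j < dim_col (kron (X - Y) X' + kron Y (X' - Y'))"
  then have i: "i < a * c" and j: "j < b * d"
    using assms by auto
  then have "0 < c" "0 < d"
    by (auto intro: gr0I)
  with i j have "i div c < a" "j div d < b" "i mod c < c" "j mod d < d"
    by (auto simp: less_mult_imp_div_less)
  with i j assms show "(kron X X' - kron Y Y') $$ (i, j) = (kron (X - Y) X' + kron Y (X' - Y')) $$ (i, j)"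
    by (simp add: kron_def algebra_simps)
qed (use assms in auto)

lemma frob_nonneg: "0 \<le> frob X"
  by (simp add: frob_def sum_nonneg)

lemma frob_eq_L2_set: "frob X = L2_set (\<lambda>(i, j). X $$ (i, j)) ({..<dim_row X} \<times> {..<dim_col X})"
  unfolding frob_def L2_set_def by (simp add: sum.cartesian_product case_prod_beta)

lemma frob_kron: "frob (kron X Y) = frob X * frob Y"
proof -
  let ?a = "dim_row X" and ?b = "dim_row Y" and ?c = "dim_col X" and ?d = "dim_col Y"
  let ?sq = "\<lambda>i j k l. (X $$ (i, k))\<^sup>2 * (Y $$ (j, l))\<^sup>2"
  have "(\<Sum>i<?a * ?b. \<Sum>k<?c * ?d. (kron X Y $$ (i, k))\<^sup>2)
      = (\<Sum>i<?a * ?b. \<Sum>k<?c * ?d. ?sq (i div ?b) (i mod ?b) (k div ?d) (k mod ?d))"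
    by (intro sum.cong refl) (simp add: index_kron power_mult_distrib)
  also have "\<dots> = (\<Sum>i<?a * ?b. \<Sum>k<?c. \<Sum>l<?d. ?sq (i div ?b) (i mod ?b) k l)"
    by (rule sum.cong[OF refl], rule sum_lessThan_mult_div_mod)
  also have "\<dots> = (\<Sum>i<?a. \<Sum>j<?b. \<Sum>k<?c. \<Sum>l<?d. ?sq i j k l)"
    by (rule sum_lessThan_mult_div_mod)
  also have "\<dots> = (\<Sum>i<?a. \<Sum>k<?c. \<Sum>j<?b. \<Sum>l<?d. ?sq i j k l)"
    by (rule sum.cong[OF refl], rule sum.swap)
  also have "\<dots> = (\<Sum>i<?a. \<Sum>k<?c. (X $$ (i, k))\<^sup>2 * (\<Sum>j<?b. \<Sum>l<?d. (Y $$ (j, l))\<^sup>2))"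
    by (simp add: sum_distrib_left)
  also have "\<dots> = (\<Sum>i<?a. \<Sum>k<?c. (X $$ (i, k))\<^sup>2) * (\<Sum>j<?b. \<Sum>l<?d. (Y $$ (j, l))\<^sup>2)"
    by (simp add: sum_distrib_right)
  finally show ?thesis
    unfolding frob_def by (simp add: real_sqrt_mult)
qed

lemma frob_kronN: "frob (kronN f n) = (\<Prod>j<n. frob (f j))"
proof (induction n)
  case 0
  then show ?case by (simp add: frob_def)
next
  case (Suc n)
  then show ?case by (simp add: frob_kron)
qed

lemma frob_add_le:
  assumes "X \<in> carrier_mat a b" "Y \<in> carrier_mat a b"
  shows "frob (X + Y) \<le> frob X + frob Y"
proof -
  have "frob (X + Y) = L2_set (\<lambda>ij. (\<lambda>(i, j). X $$ (i, j)) ij + (\<lambda>(i, j). Y $$ (i, j)) ij) ({..<a} \<times> {..<b})"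
    unfolding frob_eq_L2_set using assms by (intro L2_set_cong) auto
  also have "\<dots> \<le> frob X + frob Y"
    unfolding frob_eq_L2_set using assms by (intro order.trans[OF L2_set_triangle_ineq]) auto
  finally show ?thesis .
qed

lemma L2_set_sum_le:
  fixes K :: nat
  shows "L2_set (\<lambda>x. \<Sum>k<K. g k x) A \<le> (\<Sum>k<K. L2_set (g k) A)"
proof (induction K)
  case 0
  then show ?case by (simp add: L2_set_def)
next
  case (Suc K)
  have "L2_set (\<lambda>x. \<Sum>k<Suc K. g k x) A \<le> L2_set (\<lambda>x. \<Sum>k<K. g k x) A + L2_set (g K) A"
    using L2_set_triangle_ineq by simp
  with Suc show ?case by simp
qed

lemma frob_msum_le:
  assumes "\<And>k. k < K \<Longrightarrow> f k \<in> carrier_mat a b"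
  shows "frob (msum a b f K) \<le> (\<Sum>k<K. frob (f k))"
proof -
  have "frob (msum a b f K) = L2_set (\<lambda>ij. \<Sum>k<K. (\<lambda>(i, j). f k $$ (i, j)) ij) ({..<a} \<times> {..<b})"
    unfolding frob_eq_L2_set by (intro L2_set_cong) (auto simp: msum_def)
  also have "\<dots> \<le> (\<Sum>k<K. L2_set (\<lambda>(i, j). f k $$ (i, j)) ({..<a} \<times> {..<b}))"
    by (rule L2_set_sum_le)
  also have "\<dots> = (\<Sum>k<K. frob (f k))"
    unfolding frob_eq_L2_set using assms by (intro sum.cong refl) auto
  finally show ?thesis .
qed

lemma msum_diff:
  fixes f g :: "nat \<Rightarrow> 'a :: ab_group_add mat"
  assumes "\<And>k. k < K \<Longrightarrow> f k \<in> carrier_mat a b" "\<And>k. k < K \<Longrightarrow> g k \<in> carrier_mat a b"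
  shows "msum a b f K - msum a b g K = msum a b (\<lambda>k. f k - g k) K"
proof (rule eq_matI)
  fix i j
  assume "i < dim_row (msum a b (\<lambda>k. f k - g k) K)" "j < dim_col (msum a b (\<lambda>k. f k - g k) K)"
  then have "i < a" "j < b"
    by (auto simp: msum_def)
  have "(f k - g k) $$ (i, j) = f k $$ (i, j) - g k $$ (i, j)" if "k < K" for k
    using assms(1)[OF that] assms(2)[OF that] \<open>i < a\<close> \<open>j < b\<close> by auto
  then have "(\<Sum>k<K. (f k - g k) $$ (i, j)) = (\<Sum>k<K. f k $$ (i, j) - g k $$ (i, j))"
    by (intro sum.cong) auto
  with \<open>i < a\<close> \<open>j < b\<close> show "(msum a b f K - msum a b g K) $$ (i, j) = msum a b (\<lambda>k. f k - g k) K $$ (i, j)"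
    by (simp add: msum_def sum_subtractf)
qed (auto simp: msum_def)

lemma sum_le_sqrt_card_mult_sqrt_sum_squares:
  fixes f :: "nat \<Rightarrow> real"
  shows "(\<Sum>i<n. f i) \<le> sqrt (real n) * sqrt (\<Sum>i<n. (f i)\<^sup>2)"
proof -
  have "(\<Sum>i<n. f i) \<le> (\<Sum>i<n. \<bar>f i\<bar> * \<bar>1\<bar>)"
    by (intro sum_mono) simp
  also have "\<dots> \<le> L2_set f {..<n} * L2_set (\<lambda>_. 1) {..<n}"
    by (rule L2_set_mult_ineq)
  also have "\<dots> = sqrt (real n) * sqrt (\<Sum>i<n. (f i)\<^sup>2)"
    by (simp add: L2_set_constant L2_set_def)
  finally show ?thesis .
qed

text \<open>Multiplying by \<open>\<alpha>\<close> avoids the exponent \<open>n - 1\<close>, so the bound holds for \<open>n = 0\<close> too.\<close>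

lemma frob_kronN_diff_le:
  fixes A B :: "nat \<Rightarrow> real mat"
  assumes "\<And>j. j < n \<Longrightarrow> A j \<in> carrier_mat (m j) (p j)"
    and "\<And>j. j < n \<Longrightarrow> B j \<in> carrier_mat (m j) (p j)"
    and "\<And>j. j < n \<Longrightarrow> frob (A j) = \<alpha>"
    and "\<And>j. j < n \<Longrightarrow> frob (B j) = \<alpha>"
  shows "\<alpha> * frob (kronN A n - kronN B n) \<le> \<alpha> ^ n * (\<Sum>j<n. frob (A j - B j))"
  using assms
proof (induction n)
  case 0
  then show ?case by (simp add: frob_def)
next
  case (Suc n)
  let ?KA = "kronN A n" and ?KB = "kronN B n"
  have carrier: "?KA \<in> carrier_mat (\<Prod>j<n. m j) (\<Prod>j<n. p j)" "?KB \<in> carrier_mat (\<Prod>j<n. m j) (\<Prod>j<n. p j)"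
    "A n \<in> carrier_mat (m n) (p n)" "B n \<in> carrier_mat (m n) (p n)"
    using Suc.prems by (auto intro!: kronN_carrier_mat)
  have "\<alpha> = frob (A n)" and "frob ?KB = \<alpha> ^ n"
    using Suc.prems by (simp_all add: frob_kronN)
  then have "0 \<le> \<alpha>"
    by (simp add: frob_nonneg)
  have "frob (kronN A (Suc n) - kronN B (Suc n)) = frob (kron (?KA - ?KB) (A n) + kron ?KB (A n - B n))"
    using kron_diff_split[OF carrier] by simp
  also have "\<dots> \<le> frob (?KA - ?KB) * \<alpha> + \<alpha> ^ n * frob (A n - B n)"
    using frob_add_le[OF kron_carrier_mat[OF minus_carrier_mat[OF carrier(2)] carrier(3)]
        kron_carrier_mat[OF carrier(2) minus_carrier_mat[OF carrier(4)]]]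
      \<open>\<alpha> = frob (A n)\<close> \<open>frob ?KB = \<alpha> ^ n\<close>
    by (simp add: frob_kron)
  finally have "\<alpha> * frob (kronN A (Suc n) - kronN B (Suc n))
      \<le> \<alpha> * (frob (?KA - ?KB) * \<alpha> + \<alpha> ^ n * frob (A n - B n))"
    using \<open>0 \<le> \<alpha>\<close> by (rule mult_left_mono)
  also have "\<dots> = \<alpha> * (\<alpha> * frob (?KA - ?KB)) + \<alpha> ^ Suc n * frob (A n - B n)"
    by (simp add: algebra_simps)
  also have "\<dots> \<le> \<alpha> * (\<alpha> ^ n * (\<Sum>j<n. frob (A j - B j))) + \<alpha> ^ Suc n * frob (A n - B n)"
    using Suc \<open>0 \<le> \<alpha>\<close> by (simp add: mult_left_mono)
  also have "\<dots> = \<alpha> ^ Suc n * (\<Sum>j<Suc n. frob (A j - B j))"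
    by (simp add: algebra_simps)
  finally show ?case .
qed

lemma frob_kronN_diff_le_sqrt:
  fixes A B :: "nat \<Rightarrow> real mat"
  assumes "\<alpha> > 0" "n \<ge> 1"
    and "\<And>j. j < n \<Longrightarrow> A j \<in> carrier_mat (m j) (p j)"
    and "\<And>j. j < n \<Longrightarrow> B j \<in> carrier_mat (m j) (p j)"
    and "\<And>j. j < n \<Longrightarrow> frob (A j) = \<alpha>"
    and "\<And>j. j < n \<Longrightarrow> frob (B j) = \<alpha>"
  shows "frob (kronN A n - kronN B n)
    \<le> \<alpha> ^ (n - 1) * sqrt (real n) * sqrt (\<Sum>j<n. (frob (A j - B j))\<^sup>2)"
proof -
  have "\<alpha> * frob (kronN A n - kronN B n) \<le> \<alpha> ^ n * (\<Sum>j<n. frob (A j - B j))"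
    using assms(3-6) by (rule frob_kronN_diff_le)
  also have "\<alpha> ^ n = \<alpha> * \<alpha> ^ (n - 1)"
    using \<open>n \<ge> 1\<close> by (cases n) auto
  finally have "\<alpha> * frob (kronN A n - kronN B n) \<le> \<alpha> * (\<alpha> ^ (n - 1) * (\<Sum>j<n. frob (A j - B j)))"
    by (simp add: mult.assoc)
  then have "frob (kronN A n - kronN B n) \<le> \<alpha> ^ (n - 1) * (\<Sum>j<n. frob (A j - B j))"
    using \<open>\<alpha> > 0\<close> by simp
  also have "\<dots> \<le> \<alpha> ^ (n - 1) * (sqrt (real n) * sqrt (\<Sum>j<n. (frob (A j - B j))\<^sup>2))"
    using \<open>\<alpha> > 0\<close> by (intro mult_left_mono sum_le_sqrt_card_mult_sqrt_sum_squares) simp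
  finally show ?thesis
    by (simp add: mult.assoc)
qed

theorem lemma8:
  fixes A B :: "nat \<Rightarrow> nat \<Rightarrow> real mat" and m p :: "nat \<Rightarrow> nat"
    and \<alpha> \<epsilon> :: real and N r :: nat
  assumes "\<alpha> > 0" and "N \<ge> 1" and "r \<ge> 1"
    and "\<And>k n. k < r \<Longrightarrow> n < N \<Longrightarrow> A k n \<in> carrier_mat (m n) (p n)"
    and "\<And>k n. k < r \<Longrightarrow> n < N \<Longrightarrow> B k n \<in> carrier_mat (m n) (p n)"
    and "\<And>k n. k < r \<Longrightarrow> n < N \<Longrightarrow> frob (A k n) = \<alpha>"
    and "\<And>k n. k < r \<Longrightarrow> n < N \<Longrightarrow> frob (B k n) = \<alpha>"
    and "sqrt (\<Sum>k<r. \<Sum>n<N. (frob (A k n - B k n))\<^sup>2) \<le> \<epsilon>"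
  shows "frob (msum (\<Prod>n<N. m n) (\<Prod>n<N. p n) (\<lambda>k. kronN (A k) N) r
              - msum (\<Prod>n<N. m n) (\<Prod>n<N. p n) (\<lambda>k. kronN (B k) N) r)
         \<le> \<alpha> ^ (N - 1) * sqrt (real (N * r)) * \<epsilon>"
proof -
  define s where "s k = sqrt (\<Sum>n<N. (frob (A k n - B k n))\<^sup>2)" for k
  have carrier: "kronN (A k) N \<in> carrier_mat (\<Prod>n<N. m n) (\<Prod>n<N. p n)"
    "kronN (B k) N \<in> carrier_mat (\<Prod>n<N. m n) (\<Prod>n<N. p n)" if "k < r" for k
    using assms(4,5) that by (auto intro!: kronN_carrier_mat)
  have "(\<Sum>k<r. (s k)\<^sup>2) = (\<Sum>k<r. \<Sum>n<N. (frob (A k n - B k n))\<^sup>2)"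
    unfolding s_def by (simp add: sum_nonneg)
  then have "(\<Sum>k<r. s k) \<le> sqrt (real r) * sqrt (\<Sum>k<r. \<Sum>n<N. (frob (A k n - B k n))\<^sup>2)"
    using sum_le_sqrt_card_mult_sqrt_sum_squares[of s r] by simp
  also have "\<dots> \<le> sqrt (real r) * \<epsilon>"
    using assms(8) by (rule mult_left_mono) simp
  finally have sum_s: "(\<Sum>k<r. s k) \<le> sqrt (real r) * \<epsilon>" .
  have "frob (msum (\<Prod>n<N. m n) (\<Prod>n<N. p n) (\<lambda>k. kronN (A k) N) r
              - msum (\<Prod>n<N. m n) (\<Prod>n<N. p n) (\<lambda>k. kronN (B k) N) r)
      = frob (msum (\<Prod>n<N. m n) (\<Prod>n<N. p n) (\<lambda>k. kronN (A k) N - kronN (B k) N) r)"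
    using carrier by (simp add: msum_diff)
  also have "\<dots> \<le> (\<Sum>k<r. frob (kronN (A k) N - kronN (B k) N))"
    using carrier by (intro frob_msum_le minus_carrier_mat)
  also have "\<dots> \<le> (\<Sum>k<r. \<alpha> ^ (N - 1) * sqrt (real N) * s k)"
    unfolding s_def using assms(1,2,4-7)
    by (intro sum_mono frob_kronN_diff_le_sqrt[where m = m and p = p]) auto
  also have "\<dots> = \<alpha> ^ (N - 1) * sqrt (real N) * (\<Sum>k<r. s k)"
    by (simp add: sum_distrib_left)
  also have "\<dots> \<le> \<alpha> ^ (N - 1) * sqrt (real N) * (sqrt (real r) * \<epsilon>)"
    using sum_s assms(1) by (simp add: mult_left_mono)
  also have "\<dots> = \<alpha> ^ (N - 1) * sqrt (real (N * r)) * \<epsilon>"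
    by (simp add: real_sqrt_mult)
  finally show ?thesis .
qed

end
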